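(* Let $d\ge1$ and let $\mathfrak{T}:\mathcal{S}(\mathbb{R}^{2d})\to\mathcal{S}'(\mathbb{R}^{2d})$ be a non-zero continuous linear operator such that there is a function $\Phi:\mathbb{R}^{4d}\to\mathbb{R}^{4d}$ with $\mathfrak{T}\rho(\lambda)F=c\,\rho(\Phi(\lambda))\mathfrak{T}F$ for all $\lambda\in\mathbb{R}^{4d}$, $F\in\mathcal{S}(\mathbb{R}^{2d})$ (with constants $c\in\mathbb{C}$ possibly depending on $\lambda$). Let $$H=\{\nu\in\mathbb{R}^{4d}:\ \exists\, c_\nu\in\mathbb{C}\text{ with }\rho(\nu)\mathfrak{T}F=c_\nu\mathfrak{T}F\text{ for all }F\in\mathcal{S}(\mathbb{R}^{2d})\}$$ and let $q_H:\mathbb{R}^{4d}\to\mathbb{R}^{4d}/H$ be the quotient map. Then $q_H\circ\Phi:\mathbb{R}^{4d}\to\mathbb{R}^{4d}/H$ is one-to-one.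
   Context: For $x,\omega,t\in\mathbb{R}^{2d}$: $T_xF(t)=F(t-x)$, $M_\omega F(t)=e^{2\pi i\omega\cdot t}F(t)$, and for $(x,\omega)\in\mathbb{R}^{4d}$, $\rho(x,\omega)=T_{x/2}M_\omega T_{x/2}$, acting on $\mathcal{S}(\mathbb{R}^{2d})$ and by duality on $\mathcal{S}'(\mathbb{R}^{2d})$. $H$ is a subgroup of $\mathbb{R}^{4d}$. Continuity of $\mathfrak{T}$ is from the Schwartz topology to the weak* topology. *)

theory Defs
  imports "HOL-Analysis.Analysis"
begin

type_synonym ('n) fn = "real^('n::finite) \<Rightarrow> complex"

definition dir_deriv :: "real^('n::finite) \<Rightarrow> 'n fn \<Rightarrow> 'n fn" where
  "dir_deriv v f x = vector_derivative (\<lambda>t::real. f (x + t *\<^sub>R v)) (at 0)"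

fun iter_deriv :: "(real^('n::finite)) list \<Rightarrow> 'n fn \<Rightarrow> 'n fn" where
  "iter_deriv [] f = f"
| "iter_deriv (v # vs) f = dir_deriv v (iter_deriv vs f)"

definition schwartz :: "('n::finite) fn \<Rightarrow> bool" where
  "schwartz f \<longleftrightarrow>
     (\<forall>vs. set vs \<subseteq> Basis \<longrightarrow> (\<forall>x. iter_deriv vs f differentiable (at x))) \<and>
     (\<forall>vs m. set vs \<subseteq> Basis \<longrightarrow>
        bounded (range (\<lambda>x. ((1 + norm x) ^ m) *\<^sub>R iter_deriv vs f x)))"

definition schwartz_seminorm :: "nat \<Rightarrow> ('n::finite) fn \<Rightarrow> real" where
  "schwartz_seminorm N f =
     (SUP p \<in> UNIV \<times> {vs. length vs \<le> N \<and> set vs \<subseteq> Basis}.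
        (1 + norm (fst p)) ^ N * norm (iter_deriv (snd p) f (fst p)))"

type_synonym 'n distr = "'n fn \<Rightarrow> complex"

definition tempered :: "('n::finite) distr \<Rightarrow> bool" where
  "tempered u \<longleftrightarrow>
     (\<forall>f g a b. schwartz f \<longrightarrow> schwartz g \<longrightarrow>
        u (\<lambda>t. a * f t + b * g t) = a * u f + b * u g) \<and>
     (\<exists>C N. \<forall>g. schwartz g \<longrightarrow> norm (u g) \<le> C * schwartz_seminorm N g)"

definition distr_eq :: "('n::finite) distr \<Rightarrow> 'n distr \<Rightarrow> bool" where
  "distr_eq u v \<longleftrightarrow> (\<forall>g. schwartz g \<longrightarrow> u g = v g)"

definition transl :: "real^('n::finite) \<Rightarrow> 'n fn \<Rightarrow> 'n fn" where
  "transl x F = (\<lambda>t. F (t - x))"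

definition modul :: "real^('n::finite) \<Rightarrow> 'n fn \<Rightarrow> 'n fn" where
  "modul w F = (\<lambda>t. cis (2 * pi * (w \<bullet> t)) * F t)"

definition rho :: "(real^('n::finite)) \<times> (real^'n) \<Rightarrow> 'n fn \<Rightarrow> 'n fn" where
  "rho l = transl ((1/2) *\<^sub>R fst l) \<circ> modul (snd l) \<circ> transl ((1/2) *\<^sub>R fst l)"

text \<open>Action on distributions by duality (bilinear pairing): the transpose of
  rho(x,w) with respect to the pairing \<integral> F g is rho(-x,w).\<close>
definition rho_distr :: "(real^('n::finite)) \<times> (real^'n) \<Rightarrow> 'n distr \<Rightarrow> 'n distr" where
  "rho_distr l u = (\<lambda>g. u (rho (- fst l, snd l) g))"

text \<open>Continuous linear operators S -> S' (weak* topology on S').\<close>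
definition cont_lin_op :: "(('n::finite) fn \<Rightarrow> 'n distr) \<Rightarrow> bool" where
  "cont_lin_op T \<longleftrightarrow>
     (\<forall>F. schwartz F \<longrightarrow> tempered (T F)) \<and>
     (\<forall>F G a b. schwartz F \<longrightarrow> schwartz G \<longrightarrow>
        distr_eq (T (\<lambda>t. a * F t + b * G t)) (\<lambda>g. a * T F g + b * T G g)) \<and>
     (\<forall>g. schwartz g \<longrightarrow>
        (\<exists>C N. \<forall>F. schwartz F \<longrightarrow> norm (T F g) \<le> C * schwartz_seminorm N F))"

definition H_of :: "(('n::finite) fn \<Rightarrow> 'n distr) \<Rightarrow> ((real^'n) \<times> (real^'n)) set" where
  "H_of T = {\<nu>. \<exists>c. \<forall>F. schwartz F \<longrightarrow> distr_eq (rho_distr \<nu> (T F)) (\<lambda>g. c * T F g)}"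

definition quot_map :: "('a::ab_group_add) set \<Rightarrow> 'a \<Rightarrow> 'a set" where
  "quot_map H a = (\<lambda>h. a + h) ` H"

end

theory Submission
  imports Defs
begin

text \<open>
  If \<open>\<Phi> l\<close> and \<open>\<Phi> m\<close> lie in the same coset of \<open>H\<close>, covariance moves \<open>\<rho>(l)\<close> through
  \<open>T\<close>, the \<open>H\<close>-part is absorbed as a scalar, and one gets \<open>T \<rho>(l - m) = D T\<close> for a constant
  \<open>D\<close>, which is nonzero because \<open>T\<close> is. Moving any \<open>\<rho>(\<kappa>)\<close> through \<open>T\<close> then shows that
  \<open>T \<rho>(l - m) \<rho>(\<kappa>) = T \<rho>(\<kappa>) \<rho>(l - m)\<close>, whereas the Heisenberg commutation relation makes
  the two sides differ by the factor \<open>e^(2 \<pi> i \<sigma>(l - m, \<kappa>))\<close>. So this character of \<open>\<kappa>\<close> is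
  trivial, and the nondegeneracy of the symplectic form \<open>\<sigma>\<close> gives \<open>l = m\<close>. The only analysis
  needed is that the time-frequency shifts \<open>\<rho>(\<lambda>)\<close> preserve the Schwartz class.
\<close>

section \<open>Time-frequency shifts preserve the Schwartz class\<close>

definition diff_rapid_decay :: "('n::finite) fn \<Rightarrow> bool" where
  "diff_rapid_decay f \<longleftrightarrow> (\<forall>x. f differentiable (at x)) \<and>
     (\<forall>m. bounded (range (\<lambda>x. ((1 + norm x) ^ m) *\<^sub>R f x)))"

lemma schwartz_iff_diff_rapid_decay:
  "schwartz f \<longleftrightarrow> (\<forall>vs. set vs \<subseteq> Basis \<longrightarrow> diff_rapid_decay (iter_deriv vs f))"
  unfolding schwartz_def diff_rapid_decay_def by blast

lemma diff_rapid_decay_zero: "diff_rapid_decay (\<lambda>x. 0)"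
  by (simp add: diff_rapid_decay_def)

lemma diff_rapid_decay_add:
  assumes "diff_rapid_decay f" "diff_rapid_decay g"
  shows "diff_rapid_decay (\<lambda>x. f x + g x)"
  using assms unfolding diff_rapid_decay_def scaleR_add_right
  by (auto intro!: derivative_intros bounded_plus_comp)

lemma diff_rapid_decay_cmult:
  assumes "diff_rapid_decay f"
  shows "diff_rapid_decay (\<lambda>x. c * f x)"
  unfolding diff_rapid_decay_def
proof safe
  show "(\<lambda>x. c * f x) differentiable (at x)" for x
    using assms unfolding diff_rapid_decay_def by (auto intro!: derivative_intros)
  show "bounded (range (\<lambda>x. ((1 + norm x) ^ m) *\<^sub>R (c * f x)))" for m
  proof -
    have "bounded ((\<lambda>z. c * z) ` range (\<lambda>x. ((1 + norm x) ^ m) *\<^sub>R f x))"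
      using assms unfolding diff_rapid_decay_def
      by (blast intro: bounded_linear_image bounded_linear_mult_right)
    then show ?thesis by (simp add: image_image mult_scaleR_right)
  qed
qed

lemma diff_rapid_decay_modul:
  assumes "diff_rapid_decay f"
  shows "diff_rapid_decay (modul w f)"
  unfolding diff_rapid_decay_def
proof safe
  have phase: "((\<lambda>t. 2 * pi * (w \<bullet> t)) has_derivative (\<lambda>h. 2 * pi * (w \<bullet> h))) (at x)" for x
    by (auto intro!: derivative_eq_intros)
  have "(\<lambda>t. cis (2 * pi * (w \<bullet> t))) differentiable (at x)" for x
    using has_derivative_cis[OF phase] unfolding differentiable_def by blast
  then show "modul w f differentiable (at x)" for x
    using assms unfolding diff_rapid_decay_def modul_def by (auto intro!: derivative_intros)
  show "bounded (range (\<lambda>x. ((1 + norm x) ^ m) *\<^sub>R modul w f x))" for m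
    using assms unfolding diff_rapid_decay_def bounded_iff
    by (simp add: modul_def norm_mult)
qed

lemma diff_rapid_decay_transl:
  assumes "diff_rapid_decay f"
  shows "diff_rapid_decay (transl a f)"
  unfolding diff_rapid_decay_def
proof safe
  fix x
  have "(f \<circ> (\<lambda>t. t - a)) differentiable (at x)"
    using assms unfolding diff_rapid_decay_def
    by (intro differentiable_chain_at derivative_intros) auto
  then show "transl a f differentiable (at x)" by (simp add: transl_def o_def)
next
  fix m
  obtain B where B: "\<And>x. norm (((1 + norm x) ^ m) *\<^sub>R f x) \<le> B"
    using assms unfolding diff_rapid_decay_def bounded_iff by blast
  have "norm (((1 + norm y) ^ m) *\<^sub>R transl a f y) \<le> (1 + norm a) ^ m * B" for y
  proof -
    have "1 + norm y \<le> 1 + norm a + norm (y - a) + norm a * norm (y - a)"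
      using norm_triangle_sub[of y a] mult_nonneg_nonneg[OF norm_ge_zero norm_ge_zero, of a "y - a"]
      by linarith
    also have "\<dots> = (1 + norm a) * (1 + norm (y - a))"
      by (simp add: algebra_simps)
    finally have "(1 + norm y) ^ m \<le> ((1 + norm a) * (1 + norm (y - a))) ^ m"
      by (intro power_mono) auto
    then have "norm (((1 + norm y) ^ m) *\<^sub>R transl a f y)
        \<le> (1 + norm a) ^ m * norm (((1 + norm (y - a)) ^ m) *\<^sub>R f (y - a))"
      by (simp add: transl_def power_mult_distrib flip: mult.assoc) (simp add: mult_right_mono)
    also have "\<dots> \<le> (1 + norm a) ^ m * B"
      by (intro mult_left_mono B) auto
    finally show ?thesis .
  qed
  then show "bounded (range (\<lambda>x. ((1 + norm x) ^ m) *\<^sub>R transl a f x))"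
    unfolding bounded_iff by blast
qed

lemma iter_deriv_transl: "iter_deriv vs (transl a f) = transl a (iter_deriv vs f)"
proof (induction vs)
  case (Cons v vs)
  have "(\<lambda>t. transl a (iter_deriv vs f) (y + t *\<^sub>R v)) = (\<lambda>t. iter_deriv vs f (y - a + t *\<^sub>R v))"
    for y by (simp add: transl_def algebra_simps)
  then show ?case
    using Cons by (auto simp: dir_deriv_def transl_def)
qed simp

lemma schwartz_transl: "schwartz f \<Longrightarrow> schwartz (transl a f)"
  unfolding schwartz_iff_diff_rapid_decay iter_deriv_transl
  using diff_rapid_decay_transl by blast

definition deriv_comb :: "(complex \<times> (real^('n::finite)) list) list \<Rightarrow> 'n fn \<Rightarrow> 'n fn" where
  "deriv_comb L F t = (\<Sum>p\<leftarrow>L. fst p * iter_deriv (snd p) F t)"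

lemma deriv_comb_Nil [simp]: "deriv_comb [] F t = 0"
  by (simp add: deriv_comb_def)

lemma deriv_comb_Cons [simp]:
  "deriv_comb (p # L) F t = fst p * iter_deriv (snd p) F t + deriv_comb L F t"
  by (simp add: deriv_comb_def)

lemma deriv_comb_append [simp]:
  "deriv_comb (L1 @ L2) F t = deriv_comb L1 F t + deriv_comb L2 F t"
  by (simp add: deriv_comb_def)

lemma deriv_comb_scale:
  "deriv_comb (map (\<lambda>p. (c * fst p, snd p)) L) F t = c * deriv_comb L F t"
  by (induction L) (auto simp: algebra_simps)

lemma diff_rapid_decay_deriv_comb:
  assumes "schwartz F" "\<forall>p\<in>set L. set (snd p) \<subseteq> Basis"
  shows "diff_rapid_decay (deriv_comb L F)"
  using assms(2)
proof (induction L)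
  case Nil
  then show ?case using diff_rapid_decay_zero by simp
next
  case (Cons p L)
  then have "diff_rapid_decay (iter_deriv (snd p) F)"
    using assms(1) schwartz_iff_diff_rapid_decay by auto
  with Cons show ?case
    by (simp add: diff_rapid_decay_add diff_rapid_decay_cmult)
qed

lemma has_vector_derivative_dir_deriv:
  assumes "G differentiable (at x)"
  shows "((\<lambda>s. G (x + s *\<^sub>R v)) has_vector_derivative dir_deriv v G x) (at 0)"
proof -
  obtain G' where G': "(G has_derivative G') (at x)"
    using assms differentiable_def by blast
  have "((\<lambda>s::real. x + s *\<^sub>R v) has_derivative (\<lambda>s. s *\<^sub>R v)) (at 0)"
    by (auto intro!: derivative_eq_intros)
  moreover have "(G has_derivative G') (at ((\<lambda>s::real. x + s *\<^sub>R v) 0))"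
    using G' by simp
  ultimately have "((\<lambda>s. G (x + s *\<^sub>R v)) has_derivative (\<lambda>s. G' (s *\<^sub>R v))) (at 0)"
    by (rule has_derivative_compose)
  moreover have "(\<lambda>s. G' (s *\<^sub>R v)) = (\<lambda>s. s *\<^sub>R G' v)"
    using G' has_derivative_linear linear_scale by blast
  ultimately have "((\<lambda>s. G (x + s *\<^sub>R v)) has_vector_derivative G' v) (at 0)"
    by (simp add: has_vector_derivative_def)
  moreover from this have "dir_deriv v G x = G' v"
    unfolding dir_deriv_def by (rule vector_derivative_at)
  ultimately show ?thesis by simp
qed

lemma deriv_comb_has_vector_derivative:
  assumes "schwartz F" "\<forall>p\<in>set L. set (snd p) \<subseteq> Basis"
  shows "((\<lambda>s. deriv_comb L F (x + s *\<^sub>R v)) has_vector_derivative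
           deriv_comb (map (\<lambda>p. (fst p, v # snd p)) L) F x) (at 0)"
  using assms(2)
proof (induction L)
  case Nil
  then show ?case by (simp add: has_vector_derivative_const)
next
  case (Cons p L)
  then have "iter_deriv (snd p) F differentiable (at x)"
    using assms(1) unfolding schwartz_def by simp
  from has_vector_derivative_dir_deriv[OF this, of v] Cons show ?case
    by (auto intro!: derivative_eq_intros)
qed

lemma cis_phase_has_vector_derivative:
  "((\<lambda>s. cis (2 * pi * (w \<bullet> (x + s *\<^sub>R v)))) has_vector_derivative
     cis (2 * pi * (w \<bullet> x)) * (\<i> * of_real (2 * pi * (w \<bullet> v)))) (at 0)"
proof -
  have "((\<lambda>s. 2 * pi * (w \<bullet> (x + s *\<^sub>R v))) has_derivative (\<lambda>s. s * (2 * pi * (w \<bullet> v)))) (at 0)"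
    by (auto intro!: derivative_eq_intros simp: inner_add_right algebra_simps)
  from has_derivative_cis[OF this] show ?thesis
    by (simp add: has_vector_derivative_def scaleR_conv_of_real algebra_simps)
qed

lemma iter_deriv_modul:
  assumes "schwartz F"
  shows "set vs \<subseteq> Basis \<Longrightarrow> \<exists>L. (\<forall>p\<in>set L. set (snd p) \<subseteq> Basis) \<and>
    iter_deriv vs (modul w F) = modul w (deriv_comb L F)"
proof (induction vs)
  case Nil
  show ?case by (rule exI[of _ "[(1, [])]"]) (simp add: modul_def)
next
  case (Cons v vs)
  then obtain L where L: "\<forall>p\<in>set L. set (snd p) \<subseteq> Basis"
    and IH: "iter_deriv vs (modul w F) = modul w (deriv_comb L F)"
    by auto
  define c where "c = \<i> * of_real (2 * pi * (w \<bullet> v))"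
  define L' where "L' = map (\<lambda>p. (fst p, v # snd p)) L @ map (\<lambda>p. (c * fst p, snd p)) L"
  have "dir_deriv v (modul w (deriv_comb L F)) x = modul w (deriv_comb L' F) x" for x
  proof -
    have "((\<lambda>s. modul w (deriv_comb L F) (x + s *\<^sub>R v)) has_vector_derivative
        cis (2 * pi * (w \<bullet> x)) * deriv_comb (map (\<lambda>p. (fst p, v # snd p)) L) F x
        + cis (2 * pi * (w \<bullet> x)) * c * deriv_comb L F x) (at 0)"
      using has_vector_derivative_mult[OF cis_phase_has_vector_derivative
            deriv_comb_has_vector_derivative[OF assms L]]
      by (simp add: modul_def c_def)
    moreover have "cis (2 * pi * (w \<bullet> x)) * deriv_comb (map (\<lambda>p. (fst p, v # snd p)) L) F x
        + cis (2 * pi * (w \<bullet> x)) * c * deriv_comb L F x = modul w (deriv_comb L' F) x"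
      by (simp add: modul_def L'_def deriv_comb_scale algebra_simps)
    ultimately show ?thesis
      unfolding dir_deriv_def by (simp add: vector_derivative_at)
  qed
  moreover have "\<forall>p\<in>set L'. set (snd p) \<subseteq> Basis"
    using L Cons.prems unfolding L'_def by fastforce
  ultimately show ?case
    using IH by (intro exI[of _ L']) auto
qed

lemma schwartz_modul: "schwartz F \<Longrightarrow> schwartz (modul w F)"
  unfolding schwartz_iff_diff_rapid_decay[of "modul w F"]
  by (metis iter_deriv_modul diff_rapid_decay_deriv_comb diff_rapid_decay_modul)

lemma schwartz_rho: "schwartz F \<Longrightarrow> schwartz (rho l F)"
  by (simp add: rho_def schwartz_transl schwartz_modul)

section \<open>Heisenberg commutation relations\<close>

lemma rho_apply: "rho l F t = cis (2 * pi * (snd l \<bullet> (t - (1/2) *\<^sub>R fst l))) * F (t - fst l)"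
proof -
  have "t - (1/2) *\<^sub>R fst l - (1/2) *\<^sub>R fst l = t - fst l"
    by (simp add: algebra_simps flip: scaleR_add_left)
  then show ?thesis by (simp add: rho_def transl_def modul_def)
qed

definition symp :: "(real^('n::finite)) \<times> (real^'n) \<Rightarrow> (real^'n) \<times> (real^'n) \<Rightarrow> real" where
  "symp a b = snd a \<bullet> fst b - snd b \<bullet> fst a"

lemma rho_rho: "rho a (rho b F) = (\<lambda>t. cis (pi * symp a b) * rho (a + b) F t)"
proof
  fix t
  have "2 * pi * (snd a \<bullet> (t - (1/2) *\<^sub>R fst a)) + 2 * pi * (snd b \<bullet> (t - fst a - (1/2) *\<^sub>R fst b))
      = pi * symp a b + 2 * pi * ((snd a + snd b) \<bullet> (t - (1/2) *\<^sub>R (fst a + fst b)))"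
    by (simp add: symp_def inner_diff_right inner_add_left inner_add_right inner_commute algebra_simps)
  then have "cis (2 * pi * (snd a \<bullet> (t - (1/2) *\<^sub>R fst a)))
        * cis (2 * pi * (snd b \<bullet> (t - fst a - (1/2) *\<^sub>R fst b)))
      = cis (pi * symp a b) * cis (2 * pi * ((snd a + snd b) \<bullet> (t - (1/2) *\<^sub>R (fst a + fst b))))"
    by (simp only: cis_mult)
  moreover have "t - fst a - fst b = t - (fst a + fst b)" by simp
  ultimately show "rho a (rho b F) t = cis (pi * symp a b) * rho (a + b) F t"
    unfolding rho_apply fst_add snd_add by (simp only: mult.assoc[symmetric])
qed

lemma rho_zero: "rho 0 F = F"
  by (rule ext) (simp add: rho_apply)

lemma rho_rho_uminus: "rho a (rho (- a) F) = F"
  by (simp add: rho_rho symp_def inner_commute rho_zero)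

lemma rho_commute: "rho a (rho b F) = (\<lambda>t. cis (2 * pi * symp a b) * rho b (rho a F) t)"
proof -
  have "cis (2 * pi * symp a b) * cis (pi * symp b a) = cis (pi * symp a b)"
    by (simp add: cis_mult symp_def algebra_simps)
  then show ?thesis
    by (simp add: rho_rho add.commute mult.assoc[symmetric])
qed

lemma symp_character_trivial:
  assumes "\<forall>b. cis (2 * pi * symp a b) = 1"
  shows "a = 0"
proof (rule ccontr)
  assume "a \<noteq> 0"
  define N where "N = fst a \<bullet> fst a + snd a \<bullet> snd a"
  have "N > 0"
    using \<open>a \<noteq> 0\<close> unfolding N_def prod_eq_iff
    by (metis add_nonneg_pos add_pos_nonneg inner_ge_zero inner_gt_zero_iff fst_zero snd_zero)
  define s where "s = 1 / (2 * N)"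
  define b where "b = (s *\<^sub>R snd a, - s *\<^sub>R fst a)"
  have "symp a b = s * N"
    unfolding symp_def N_def b_def by (simp add: algebra_simps)
  also have "\<dots> = 1 / 2"
    using \<open>N > 0\<close> unfolding s_def by simp
  finally have "cis (2 * pi * symp a b) = -1"
    by (simp only:) simp
  with assms show False
    by (metis one_neq_neg_one)
qed

lemma tempered_scale: "tempered u \<Longrightarrow> schwartz g \<Longrightarrow> u (\<lambda>t. c * g t) = c * u g"
proof -
  assume "tempered u" "schwartz g"
  then have "u (\<lambda>t. c * g t + 0 * g t) = c * u g + 0 * u g"
    unfolding tempered_def by blast
  then show ?thesis by simp
qed

lemma rho_distr_rho_distr:
  assumes "tempered u" "schwartz g"
  shows "rho_distr a (rho_distr b u) g = cis (pi * symp a b) * rho_distr (a + b) u g"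
proof -
  have "symp (- fst b, snd b) (- fst a, snd a) = symp a b"
    by (simp add: symp_def)
  then show ?thesis
    using assms by (simp add: rho_distr_def rho_rho tempered_scale schwartz_rho add.commute)
qed

section \<open>Covariant operators\<close>

lemma cont_lin_op_scale:
  assumes "cont_lin_op T" "schwartz F" "schwartz g"
  shows "T (\<lambda>t. c * F t) g = c * T F g"
proof -
  have "distr_eq (T (\<lambda>t. c * F t + 0 * F t)) (\<lambda>g. c * T F g + 0 * T F g)"
    using assms unfolding cont_lin_op_def by blast
  then show ?thesis
    using assms(3) unfolding distr_eq_def by simp
qed

lemma zero_mem_H_of: "0 \<in> H_of T"
  unfolding H_of_def distr_eq_def rho_distr_def
  by (auto intro!: exI[of _ 1] simp: rho_zero simp flip: zero_prod_def)

lemma quot_map_eq_imp_diff_mem: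
  assumes "0 \<in> H" "quot_map H a = quot_map H b"
  shows "a - b \<in> H"
proof -
  have "a \<in> quot_map H b"
    using assms unfolding quot_map_def by (metis add.right_neutral image_eqI)
  then show ?thesis
    unfolding quot_map_def by auto
qed

locale covariant_operator =
  fixes T :: "'n::finite fn \<Rightarrow> 'n distr"
    and \<Phi> :: "(real^'n) \<times> (real^'n) \<Rightarrow> (real^'n) \<times> (real^'n)"
    and c :: "(real^'n) \<times> (real^'n) \<Rightarrow> complex"
  assumes cont_lin_op: "cont_lin_op T"
    and nonzero: "\<exists>F g. schwartz F \<and> schwartz g \<and> T F g \<noteq> 0"
    and covariant: "schwartz F \<Longrightarrow> distr_eq (T (rho l F)) (\<lambda>g. c l * rho_distr (\<Phi> l) (T F) g)"
begin

lemma covariant_apply: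
  "schwartz F \<Longrightarrow> schwartz g \<Longrightarrow> T (rho l F) g = c l * rho_distr (\<Phi> l) (T F) g"
  using covariant unfolding distr_eq_def by blast

lemma tempered_T: "schwartz F \<Longrightarrow> tempered (T F)"
  using cont_lin_op unfolding cont_lin_op_def by blast

lemma T_scale: "schwartz F \<Longrightarrow> schwartz g \<Longrightarrow> T (\<lambda>t. a * F t) g = a * T F g"
  using cont_lin_op_scale[OF cont_lin_op] .

lemma scalar_shift_nonzero:
  assumes "\<And>F g. schwartz F \<Longrightarrow> schwartz g \<Longrightarrow> T (rho l F) g = D * T F g"
  shows "D \<noteq> 0"
proof
  assume "D = 0"
  obtain F g where "schwartz F" "schwartz g" "T F g \<noteq> 0"
    using nonzero by blast
  then show False
    using assms[of "rho (- l) F" g] \<open>D = 0\<close> by (simp add: rho_rho_uminus schwartz_rho)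
qed

lemma c_nonzero: "c l \<noteq> 0"
proof
  assume "c l = 0"
  obtain F g where "schwartz F" "schwartz g" "T F g \<noteq> 0"
    using nonzero by blast
  then show False
    using covariant_apply[of "rho (- l) F" g l] \<open>c l = 0\<close> by (simp add: rho_rho_uminus schwartz_rho)
qed

lemma scalar_shift_eq_0:
  assumes shift: "\<And>F g. schwartz F \<Longrightarrow> schwartz g \<Longrightarrow> T (rho \<nu> F) g = D * T F g"
  shows "\<nu> = 0"
proof -
  obtain F0 g where F0: "schwartz F0" and g: "schwartz g" and "T F0 g \<noteq> 0"
    using nonzero by blast
  moreover have "D \<noteq> 0"
    using shift by (rule scalar_shift_nonzero)
  ultimately have DT: "D * T F0 g \<noteq> 0" by simp
  have "cis (2 * pi * symp \<nu> \<kappa>) = 1" for \<kappa>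
  proof -
    define F where "F = rho (- \<kappa>) F0"
    have F: "schwartz F" unfolding F_def using F0 by (rule schwartz_rho)
    have "T (rho \<kappa> (rho \<nu> F)) g = c \<kappa> * rho_distr (\<Phi> \<kappa>) (T (rho \<nu> F)) g"
      using F g by (simp add: covariant_apply schwartz_rho)
    also have "\<dots> = D * (c \<kappa> * rho_distr (\<Phi> \<kappa>) (T F) g)"
      using F g by (simp add: rho_distr_def shift schwartz_rho)
    also have "\<dots> = D * T F0 g"
      using covariant_apply[OF F g, of \<kappa>] by (simp add: F_def rho_rho_uminus)
    finally have \<kappa>\<nu>: "T (rho \<kappa> (rho \<nu> F)) g = D * T F0 g" .
    have "D * T F0 g = T (rho \<nu> (rho \<kappa> F)) g"
      using F0 g by (simp add: shift F_def rho_rho_uminus)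
    also have "\<dots> = cis (2 * pi * symp \<nu> \<kappa>) * (D * T F0 g)"
      using F g \<kappa>\<nu> by (subst rho_commute) (simp add: T_scale schwartz_rho)
    finally show ?thesis
      using DT by simp
  qed
  then show ?thesis
    by (intro symp_character_trivial) blast
qed

lemma same_coset_scalar:
  assumes "\<Phi> l - \<Phi> m \<in> H_of T"
  obtains K where "\<And>F g. schwartz F \<Longrightarrow> schwartz g \<Longrightarrow> T (rho l F) g = K * T (rho m F) g"
proof -
  define h where "h = \<Phi> l - \<Phi> m"
  obtain ch where ch: "\<And>F g. schwartz F \<Longrightarrow> schwartz g \<Longrightarrow> rho_distr h (T F) g = ch * T F g"
    using assms unfolding h_def H_of_def distr_eq_def by blast
  define K where "K = c l * cis (- pi * symp (\<Phi> m) h) * ch / c m"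
  have "T (rho l F) g = K * T (rho m F) g" if F: "schwartz F" and g: "schwartz g" for F g
  proof -
    have "T (rho l F) g = c l * rho_distr (\<Phi> m + h) (T F) g"
      using F g by (simp add: covariant_apply h_def)
    also have "\<dots> = c l * cis (- pi * symp (\<Phi> m) h) * rho_distr (\<Phi> m) (rho_distr h (T F)) g"
      using F g by (simp add: rho_distr_rho_distr tempered_T cis_mult flip: cis_divide)
    also have "rho_distr (\<Phi> m) (rho_distr h (T F)) g = ch * rho_distr (\<Phi> m) (T F) g"
      using F g unfolding rho_distr_def[of "\<Phi> m"] by (simp add: ch schwartz_rho)
    also have "rho_distr (\<Phi> m) (T F) g = T (rho m F) g / c m"
      using F g by (simp add: covariant_apply c_nonzero)
    finally show ?thesis
      unfolding K_def by simp
  qed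
  then show ?thesis by (rule that)
qed

lemma same_coset_eq:
  assumes "\<Phi> l - \<Phi> m \<in> H_of T"
  shows "l = m"
proof -
  obtain K where K: "\<And>F g. schwartz F \<Longrightarrow> schwartz g \<Longrightarrow> T (rho l F) g = K * T (rho m F) g"
    using same_coset_scalar[OF assms] by blast
  define k where "k = cis (pi * symp l (- m))"
  have "T (rho (l - m) F) g = (K / k) * T F g" if F: "schwartz F" and g: "schwartz g" for F g
  proof -
    have "k * T (rho (l - m) F) g = T (rho l (rho (- m) F)) g"
      using F g by (simp add: k_def rho_rho T_scale schwartz_rho)
    also have "\<dots> = K * T F g"
      using F g by (simp add: K schwartz_rho rho_rho_uminus)
    finally show ?thesis
      by (simp add: k_def field_simps)
  qed
  then have "l - m = 0"
    by (rule scalar_shift_eq_0)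
  then show ?thesis by simp
qed

lemma inj_quot_map_comp: "inj (quot_map (H_of T) \<circ> \<Phi>)"
  by (intro injI same_coset_eq quot_map_eq_imp_diff_mem[OF zero_mem_H_of]) simp

end

theorem lemma4p4:
  fixes T :: "'n::finite fn \<Rightarrow> 'n distr"
    and \<Phi> :: "(real^'n) \<times> (real^'n) \<Rightarrow> (real^'n) \<times> (real^'n)"
  assumes "even CARD('n)"
    and "cont_lin_op T"
    and "\<exists>F g. schwartz F \<and> schwartz g \<and> T F g \<noteq> 0"
    and "\<forall>l. \<exists>c. \<forall>F. schwartz F \<longrightarrow>
           distr_eq (T (rho l F)) (\<lambda>g. c * rho_distr (\<Phi> l) (T F) g)"
  shows "inj (quot_map (H_of T) \<circ> \<Phi>)"
proof -
  obtain c where "\<And>l F. schwartz F \<Longrightarrow> distr_eq (T (rho l F)) (\<lambda>g. c l * rho_distr (\<Phi> l) (T F) g)"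
    using assms(4) by metis
  then interpret covariant_operator T \<Phi> c
    using assms(2,3) by unfold_locales auto
  show ?thesis by (rule inj_quot_map_comp)
qed

end
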